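(* Let $X$ be a locally compact, geodesically complete CAT(0)-space connected at infinity, $x_0\in X$ and $y\in\overline X\setminus\{x_0\}$. Let $c\colon[0,\infty)\to X$ be the geodesic ray with $c(0)=x_0$ passing through $y$ (i.e. $c(|x_0y|)=y$ if $y\in X$, or $c(+\infty)=y$ if $y\in\partial_\infty X$). If the direction of $c$ at $x_0$ has a unique inverse direction in $\Sigma_{x_0}X$, then for any $z',z''\in\operatorname{Shadow}_y(x_0)$ we have $\operatorname{Shadow}_{z'}(x_0)=\operatorname{Shadow}_{z''}(x_0)$.
   Context: $\overline X=X\cup\partial_\infty X$. For $y,z\in\overline X$, $[yz]$ denotes a geodesic segment, ray or complete geodesic joining them; $\operatorname{Shadow}_y(x)=\{z\in\overline X:\ \text{there is }[yz]\text{ with }x\in[yz]\}$. $\Sigma_xX$ is the space of directions at $x$ (metric completion of the space of germs of geodesics from $x$ with the Alexandrov angle); two directions are mutually inverse if the angle between them is $\pi$. *)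

theory Defs
  imports "HOL-Analysis.Analysis"
begin

(* The CAT(0) space X is the whole carrier type 'a (a complete metric space). *)

definition geod_seg :: "(real \<Rightarrow> 'a::metric_space) \<Rightarrow> 'a \<Rightarrow> 'a \<Rightarrow> bool" where
  "geod_seg g p q \<longleftrightarrow> g 0 = p \<and> g (dist p q) = q \<and>
     (\<forall>s\<in>{0..dist p q}. \<forall>t\<in>{0..dist p q}. dist (g s) (g t) = \<bar>s - t\<bar>)"

definition geod_ray :: "(real \<Rightarrow> 'a::metric_space) \<Rightarrow> bool" where
  "geod_ray r \<longleftrightarrow> (\<forall>s\<ge>0. \<forall>t\<ge>0. dist (r s) (r t) = \<bar>s - t\<bar>)"

definition geod_line :: "(real \<Rightarrow> 'a::metric_space) \<Rightarrow> bool" where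
  "geod_line l \<longleftrightarrow> (\<forall>s t. dist (l s) (l t) = \<bar>s - t\<bar>)"

definition geodesic_space :: "'a::metric_space itself \<Rightarrow> bool" where
  "geodesic_space _ \<longleftrightarrow> (\<forall>p q::'a. \<exists>g. geod_seg g p q)"

(* Comparison point on the side [P,Q] of a Euclidean triangle (in the plane = complex numbers). *)
definition cmp_pt :: "complex \<Rightarrow> complex \<Rightarrow> real \<Rightarrow> real \<Rightarrow> complex" where
  "cmp_pt P Q d s = P + of_real (s / d) * (Q - P)"

definition cat0_ineq :: "'a::metric_space itself \<Rightarrow> bool" where
  "cat0_ineq _ \<longleftrightarrow>
    (\<forall>(p::'a) q r g1 g2 g3 A B C.
       geod_seg g1 p q \<and> geod_seg g2 q r \<and> geod_seg g3 r p \<and>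
       cmod (A - B) = dist p q \<and> cmod (B - C) = dist q r \<and> cmod (C - A) = dist r p \<longrightarrow>
       (\<forall>(g, d, P, Q) \<in> {(g1, dist p q, A, B), (g2, dist q r, B, C), (g3, dist r p, C, A)}.
        \<forall>(g', d', P', Q') \<in> {(g1, dist p q, A, B), (g2, dist q r, B, C), (g3, dist r p, C, A)}.
        \<forall>s\<in>{0..d}. \<forall>t\<in>{0..d'}.
          dist (g s) (g' t) \<le> cmod (cmp_pt P Q d s - cmp_pt P' Q' d' t)))"

definition CAT0 :: "'a::metric_space itself \<Rightarrow> bool" where
  "CAT0 T \<longleftrightarrow> geodesic_space T \<and> cat0_ineq T"

definition geodesically_complete :: "'a::metric_space itself \<Rightarrow> bool" where
  "geodesically_complete _ \<longleftrightarrow>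
    (\<forall>g (p::'a) q. geod_seg g p q \<and> p \<noteq> q \<longrightarrow>
       (\<exists>l. geod_line l \<and> (\<forall>s\<in>{0..dist p q}. l s = g s)))"

definition connected_at_infinity :: "'a::metric_space itself \<Rightarrow> bool" where
  "connected_at_infinity _ \<longleftrightarrow>
    (\<forall>C::'a set. compact C \<longrightarrow> (\<exists>D. compact D \<and> C \<subseteq> D \<and>
        (\<forall>p q. p \<notin> D \<and> q \<notin> D \<longrightarrow> path_component (- C) p q)))"

definition asymptotic :: "(real \<Rightarrow> 'a::metric_space) \<Rightarrow> (real \<Rightarrow> 'a) \<Rightarrow> bool" where
  "asymptotic r r' \<longleftrightarrow> (\<exists>B. \<forall>t\<ge>0. dist (r t) (r' t) \<le> B)"

definition ray_class :: "(real \<Rightarrow> 'a::metric_space) \<Rightarrow> (real \<Rightarrow> 'a) set" where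
  "ray_class r = {r'. geod_ray r' \<and> asymptotic r r'}"

datatype 'a bpt = Fin 'a | Ideal "(real \<Rightarrow> 'a) set"

(* Xbar = X \<union> \<partial>\<infinity>X, ideal points being asymptote classes of geodesic rays. *)
definition Xbar :: "'a::metric_space bpt set" where
  "Xbar = range Fin \<union> {Ideal (ray_class r) | r. geod_ray r}"

(* Point sets of the geodesics [yz] (segment, ray or complete geodesic) joining y and z. *)
fun geods :: "'a::metric_space bpt \<Rightarrow> 'a bpt \<Rightarrow> 'a set set" where
  "geods (Fin p) (Fin q) = {g ` {0..dist p q} | g. geod_seg g p q}"
| "geods (Fin p) (Ideal D) = {r ` {0..} | r. geod_ray r \<and> r 0 = p \<and> r \<in> D}"
| "geods (Ideal C) (Fin q) = {r ` {0..} | r. geod_ray r \<and> r 0 = q \<and> r \<in> C}"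
| "geods (Ideal C) (Ideal D) =
     {range l | l. geod_line l \<and> l \<in> D \<and> (\<lambda>t. l (- t)) \<in> C}"

definition Shadow :: "'a::metric_space bpt \<Rightarrow> 'a \<Rightarrow> 'a bpt set" where
  "Shadow y x = {z \<in> Xbar. \<exists>S \<in> geods y z. x \<in> S}"

fun ray_through :: "(real \<Rightarrow> 'a::metric_space) \<Rightarrow> 'a \<Rightarrow> 'a bpt \<Rightarrow> bool" where
  "ray_through c x0 (Fin p) = (c (dist x0 p) = p)"
| "ray_through c x0 (Ideal C) = (c \<in> C)"

definition geod_from :: "'a::metric_space \<Rightarrow> (real \<Rightarrow> 'a) \<times> real \<Rightarrow> bool" where
  "geod_from x u \<longleftrightarrow> 0 < snd u \<and> fst u 0 = x \<and>
     (\<forall>s\<in>{0..snd u}. \<forall>t\<in>{0..snd u}. dist (fst u s) (fst u t) = \<bar>s - t\<bar>)"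

definition cmp_angle :: "'a::metric_space \<Rightarrow> 'a \<Rightarrow> 'a \<Rightarrow> real" where
  "cmp_angle x p q = arccos ((dist x p ^ 2 + dist x q ^ 2 - dist p q ^ 2) / (2 * dist x p * dist x q))"

definition alex_angle :: "'a::metric_space \<Rightarrow> (real \<Rightarrow> 'a) \<times> real \<Rightarrow> (real \<Rightarrow> 'a) \<times> real \<Rightarrow> real" where
  "alex_angle x u v = Inf {Sup {cmp_angle x (fst u s) (fst v t) | s t. 0 < s \<and> s < e \<and> 0 < t \<and> t < e}
                           | e. 0 < e \<and> e \<le> min (snd u) (snd v)}"

(* Elements of \<Sigma>_x X = completion: Cauchy sequences of geodesic germs w.r.t. the angle. *)
definition dir_cauchy :: "'a::metric_space \<Rightarrow> (nat \<Rightarrow> (real \<Rightarrow> 'a) \<times> real) \<Rightarrow> bool" where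
  "dir_cauchy x v \<longleftrightarrow> (\<forall>n. geod_from x (v n)) \<and>
     (\<forall>e>0. \<exists>N. \<forall>m\<ge>N. \<forall>n\<ge>N. alex_angle x (v m) (v n) < e)"

definition unique_inverse_dir :: "'a::metric_space \<Rightarrow> (real \<Rightarrow> 'a) \<times> real \<Rightarrow> bool" where
  "unique_inverse_dir x u \<longleftrightarrow>
     (\<exists>v. dir_cauchy x v \<and> (\<lambda>n. alex_angle x u (v n)) \<longlonglongrightarrow> pi) \<and>
     (\<forall>v w. dir_cauchy x v \<and> dir_cauchy x w \<and>
            (\<lambda>n. alex_angle x u (v n)) \<longlonglongrightarrow> pi \<and> (\<lambda>n. alex_angle x u (w n)) \<longlonglongrightarrow> pi
            \<longrightarrow> (\<lambda>n. alex_angle x (v n) (w n)) \<longlonglongrightarrow> 0)"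

end

theory Submission
  imports Defs
begin

text \<open>
  A geodesic from \<open>u\<close> to \<open>v\<close> through \<open>x\<^sub>0\<close> is the same as a pair of geodesics
  \<open>g\<^sub>u\<close>, \<open>g\<^sub>v\<close> issuing from \<open>x\<^sub>0\<close> towards \<open>u\<close> and \<open>v\<close> that are opposite, i.e.
  \<open>|g\<^sub>u(s) g\<^sub>v(t)| = s + t\<close>. For \<open>z \<in> Shadow\<^sub>y(x\<^sub>0)\<close> the geodesic from \<open>x\<^sub>0\<close> to \<open>z\<close> is
  thus opposite to the ray \<open>c\<close>, so it makes the angle \<open>\<pi>\<close> with \<open>c\<close>; since the direction
  of \<open>c\<close> has a unique inverse, the geodesics towards \<open>z'\<close> and \<open>z''\<close> make the angle \<open>0\<close>.
  In a CAT(0) space comparison angles at \<open>x\<^sub>0\<close> can only decrease when the points move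
  towards \<open>x\<^sub>0\<close>. Hence, if a geodesic \<open>h\<close> is opposite to the geodesic towards \<open>z'\<close>, which
  near \<open>x\<^sub>0\<close> is arbitrarily close to the one towards \<open>z''\<close>, then \<open>h\<close> is also opposite to
  the latter. So every geodesic \<open>[z'w]\<close> through \<open>x\<^sub>0\<close> gives a geodesic \<open>[z''w]\<close> through
  \<open>x\<^sub>0\<close>, and vice versa.
\<close>

section \<open>Comparison cosines\<close>

text \<open>By division by zero, \<open>cmp_cos x p q = 0\<close> if \<open>x = p\<close> or \<open>x = q\<close>; so its bounds need no hypotheses.\<close>

definition cmp_cos :: "'a::metric_space \<Rightarrow> 'a \<Rightarrow> 'a \<Rightarrow> real" where
  "cmp_cos x p q = (dist x p ^ 2 + dist x q ^ 2 - dist p q ^ 2) / (2 * dist x p * dist x q)"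

lemma cmp_angle_eq_arccos: "cmp_angle x p q = arccos (cmp_cos x p q)"
  unfolding cmp_angle_def cmp_cos_def ..

lemma cmp_cos_bounds:
  fixes x p q :: "'a::metric_space"
  shows "-1 \<le> cmp_cos x p q" and "cmp_cos x p q \<le> 1"
proof -
  let ?a = "dist x p" and ?b = "dist x q" and ?c = "dist p q"
  have "?c \<le> ?a + ?b" "\<bar>?a - ?b\<bar> \<le> ?c"
    using dist_triangle[of p q x] dist_triangle[of x p q] dist_triangle[of x q p]
    by (auto simp: dist_commute)
  then have "?c ^ 2 \<le> (?a + ?b) ^ 2" "(?a - ?b) ^ 2 \<le> ?c ^ 2"
    by (simp_all add: power_mono flip: abs_le_square_iff)
  then have "-(2 * ?a * ?b) \<le> ?a ^ 2 + ?b ^ 2 - ?c ^ 2" "?a ^ 2 + ?b ^ 2 - ?c ^ 2 \<le> 2 * ?a * ?b"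
    by (simp_all add: power2_eq_square algebra_simps)
  moreover have "0 \<le> 2 * ?a * ?b" by simp
  ultimately show "-1 \<le> cmp_cos x p q" "cmp_cos x p q \<le> 1"
    unfolding cmp_cos_def by (auto simp: le_divide_eq divide_le_eq_1 zero_less_mult_iff)
qed

lemma cmp_angle_le_pi: "cmp_angle x p q \<le> pi"
  using cmp_cos_bounds arccos_ubound unfolding cmp_angle_eq_arccos by blast

lemma cmp_cos_equidistant:
  assumes "dist x p = a" "dist x q = a" "0 < a"
  shows "cmp_cos x p q = 1 - dist p q ^ 2 / (2 * a ^ 2)"
  using assms unfolding cmp_cos_def by (simp add: field_simps power2_eq_square)

lemma cmp_cos_le_of_dist_ge:
  assumes "dist x p = \<sigma>" "dist x q = t" "0 < \<sigma>" "0 < t" "0 \<le> \<eta>" "\<eta> \<le> 1"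
    and far: "\<sigma> + t - \<eta> * \<sigma> \<le> dist p q"
  shows "cmp_cos x p q \<le> -1 + \<eta> * (\<sigma> + t) / t"
proof -
  have "\<eta> * \<sigma> \<le> \<sigma>"
    using assms(3,6) by simp
  with far assms(4) have "(\<sigma> + t - \<eta> * \<sigma>) ^ 2 \<le> dist p q ^ 2"
    by (intro power_mono) auto
  moreover have "0 \<le> (\<eta> * \<sigma>) ^ 2"
    by simp
  ultimately have "\<sigma> ^ 2 + t ^ 2 - dist p q ^ 2 \<le> - 2 * \<sigma> * t + 2 * \<eta> * \<sigma> * (\<sigma> + t)"
    by (simp add: power2_eq_square algebra_simps)
  then have "cmp_cos x p q \<le> (- 2 * \<sigma> * t + 2 * \<eta> * \<sigma> * (\<sigma> + t)) / (2 * \<sigma> * t)"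
    unfolding cmp_cos_def using assms(1-4) by (simp add: divide_right_mono)
  also have "\<dots> = -1 + \<eta> * (\<sigma> + t) / t"
    using assms(3,4) by (simp add: field_simps)
  finally show ?thesis .
qed

lemma cmp_cos_le_minus_one_imp_dist:
  assumes "cmp_cos x p q \<le> -1" "x \<noteq> p" "x \<noteq> q"
  shows "dist p q = dist x p + dist x q"
proof -
  have "0 < dist x p * dist x q"
    using assms(2,3) by simp
  with assms(1) have "(dist x p + dist x q) ^ 2 \<le> dist p q ^ 2"
    unfolding cmp_cos_def by (simp add: divide_le_eq power2_eq_square algebra_simps)
  then have "dist x p + dist x q \<le> dist p q"
    by (rule power2_le_imp_le) simp
  moreover have "dist p q \<le> dist x p + dist x q"
    using dist_triangle[of p q x] by (simp add: dist_commute)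
  ultimately show ?thesis
    by linarith
qed

lemma cmod_sub_cis_sq:
  "cmod (of_real s - of_real t * cis \<theta>) ^ 2 = s ^ 2 + t ^ 2 - 2 * s * t * cos \<theta>"
proof -
  have "cmod (of_real s - of_real t * cis \<theta>) ^ 2 = (s - t * cos \<theta>) ^ 2 + (t * sin \<theta>) ^ 2"
    by (simp add: cmod_power2)
  also have "\<dots> = s ^ 2 + t ^ 2 - 2 * s * t * cos \<theta>"
    using sin_cos_squared_add[of \<theta>] by algebra
  finally show ?thesis .
qed

section \<open>Geodesics in CAT(0) spaces\<close>

lemma geod_seg_dist_start:
  assumes "geod_seg g p q" "s \<in> {0..dist p q}"
  shows "dist p (g s) = s"
  using assms unfolding geod_seg_def
  by (metis abs_of_nonneg atLeastAtMost_iff diff_0_right dist_commute order_refl zero_le_dist)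

lemma geod_seg_reverse:
  assumes "geod_seg g p q"
  shows "geod_seg (\<lambda>s. g (dist p q - s)) q p"
  using assms unfolding geod_seg_def by (auto simp: dist_commute abs_minus_commute)

lemma geod_seg_backwards:
  assumes g: "geod_seg g p q" and \<tau>: "\<tau> \<in> {0..dist p q}"
  shows "geod_seg (\<lambda>s. g (\<tau> - s)) (g \<tau>) p"
proof -
  have "dist (g \<tau>) p = \<tau>"
    using geod_seg_dist_start[OF g \<tau>] by (simp add: dist_commute)
  then show ?thesis
    using g \<tau> unfolding geod_seg_def by (auto simp: abs_minus_commute)
qed

lemma geod_seg_forwards:
  assumes g: "geod_seg g p q" and \<tau>: "\<tau> \<in> {0..dist p q}"
  shows "geod_seg (\<lambda>t. g (\<tau> + t)) (g \<tau>) q"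
  using geod_seg_backwards[OF geod_seg_reverse[OF g], of "dist p q - \<tau>"] \<tau>
  by (simp add: dist_commute)

lemma geod_ray_imp_geod_seg:
  assumes "geod_ray r" "0 \<le> T"
  shows "geod_seg r (r 0) (r T)"
  using assms unfolding geod_ray_def geod_seg_def by auto

lemma cat0_side_comparison:
  fixes g1 g2 g3 :: "real \<Rightarrow> 'a::metric_space"
  assumes "CAT0 TYPE('a)"
    and "geod_seg g1 p q" "geod_seg g2 q r" "geod_seg g3 r p"
    and "cmod (A - B) = dist p q" "cmod (B - C) = dist q r" "cmod (C - A) = dist r p"
    and "s \<in> {0..dist p q}" "t \<in> {0..dist r p}"
  shows "dist (g1 s) (g3 t) \<le> cmod (cmp_pt A B (dist p q) s - cmp_pt C A (dist r p) t)"
proof -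
  have "cat0_ineq TYPE('a)"
    using assms(1) by (simp add: CAT0_def)
  define L where "L = {(g1, dist p q, A, B), (g2, dist q r, B, C), (g3, dist r p, C, A)}"
  have "\<forall>(g, d, P, Q) \<in> L. \<forall>(g', d', P', Q') \<in> L. \<forall>s\<in>{0..d}. \<forall>t\<in>{0..d'}.
      dist (g s) (g' t) \<le> cmod (cmp_pt P Q d s - cmp_pt P' Q' d' t)"
    unfolding L_def
    apply (insert \<open>cat0_ineq TYPE('a)\<close>[unfolded cat0_ineq_def])
    apply (erule allE[of _ p], erule allE[of _ q], erule allE[of _ r],
        erule allE[of _ g1], erule allE[of _ g2], erule allE[of _ g3],
        erule allE[of _ A], erule allE[of _ B], erule allE[of _ C])
    using assms(2-7) by blast
  then show ?thesis
    using assms(8,9) unfolding L_def by fast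
qed

lemma cat0_cmp_cos_mono:
  fixes g h :: "real \<Rightarrow> 'a::metric_space"
  assumes cat: "CAT0 TYPE('a)" and g: "geod_seg g x p" and h: "geod_seg h x q"
    and s: "0 < s" "s \<le> dist x p" and t: "0 < t" "t \<le> dist x q"
  shows "cmp_cos x p q \<le> cmp_cos x (g s) (h t)"
proof -
  define S T \<theta> where "S = dist x p" and "T = dist x q" and "\<theta> = arccos (cmp_cos x p q)"
  have "S > 0" "T > 0"
    using s t unfolding S_def T_def by linarith+
  have cos_\<theta>: "2 * S * T * cos \<theta> = S ^ 2 + T ^ 2 - dist p q ^ 2"
    using cmp_cos_bounds[of x p q] \<open>S > 0\<close> \<open>T > 0\<close> unfolding \<theta>_def S_def T_def cmp_cos_def by simp
  \<comment> \<open>a Euclidean comparison triangle for \<open>x, p, q\<close>, with \<open>x\<close> at \<open>A\<close>\<close>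
  define A B C where "A = (0::complex)" and "B = complex_of_real S" and "C = of_real T * cis \<theta>"
  have "cmod (B - C) ^ 2 = dist p q ^ 2"
    using cos_\<theta> unfolding B_def C_def cmod_sub_cis_sq by simp
  then have BC: "cmod (B - C) = dist p q"
    by (simp add: power2_eq_iff_nonneg)
  obtain g2 where g2: "geod_seg g2 p q"
    using cat unfolding CAT0_def geodesic_space_def by blast
  have "dist (g s) (h t) \<le> cmod (cmp_pt A B S s - cmp_pt C A T (T - t))"
    using cat0_side_comparison[OF cat g g2 geod_seg_reverse[OF h], of A B C s "T - t"]
      BC s t \<open>S > 0\<close> \<open>T > 0\<close>
    unfolding S_def T_def A_def B_def C_def by (simp add: dist_commute norm_mult)
  also have "\<dots> = cmod (of_real s - of_real t * cis \<theta>)"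
    using \<open>S > 0\<close> \<open>T > 0\<close> unfolding cmp_pt_def A_def B_def C_def by (simp add: field_simps)
  finally have "dist (g s) (h t) ^ 2 \<le> s ^ 2 + t ^ 2 - 2 * s * t * cos \<theta>"
    unfolding cmod_sub_cis_sq[symmetric] by (simp add: power_mono)
  moreover have "dist x (g s) = s" "dist x (h t) = t"
    using geod_seg_dist_start[OF g, of s] geod_seg_dist_start[OF h, of t] s t by auto
  ultimately have "cos \<theta> \<le> cmp_cos x (g s) (h t)"
    using s t unfolding cmp_cos_def by (simp add: le_divide_eq algebra_simps)
  then show ?thesis
    using cmp_cos_bounds[of x p q] unfolding \<theta>_def by simp
qed

lemma cat0_dist_le_scaled:
  fixes g h :: "real \<Rightarrow> 'a::metric_space"
  assumes cat: "CAT0 TYPE('a)" and g: "geod_seg g x p" and h: "geod_seg h x q"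
    and "dist x p = T" "dist x q = T" and s: "0 < s" "s \<le> T"
  shows "dist (g s) (h s) * T \<le> s * dist p q"
proof -
  have "dist x (g s) = s" "dist x (h s) = s"
    using geod_seg_dist_start[OF g, of s] geod_seg_dist_start[OF h, of s] assms(4,5) s by auto
  have "1 - dist p q ^ 2 / (2 * T ^ 2) = cmp_cos x p q"
    using assms(4,5) s by (intro cmp_cos_equidistant[symmetric]) auto
  also have "\<dots> \<le> cmp_cos x (g s) (h s)"
    using cat0_cmp_cos_mono[OF cat g h] assms(4,5) s by simp
  also have "\<dots> = 1 - dist (g s) (h s) ^ 2 / (2 * s ^ 2)"
    using \<open>dist x (g s) = s\<close> \<open>dist x (h s) = s\<close> s by (intro cmp_cos_equidistant) auto
  finally have "(dist (g s) (h s) * T) ^ 2 \<le> (s * dist p q) ^ 2"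
    using s by (simp add: field_simps power_mult_distrib)
  then show ?thesis
    by (rule power2_le_imp_le) (use s in simp)
qed

lemma cat0_geod_seg_unique:
  fixes g h :: "real \<Rightarrow> 'a::metric_space"
  assumes cat: "CAT0 TYPE('a)" and g: "geod_seg g x q" and h: "geod_seg h x q"
    and s: "s \<in> {0..dist x q}"
  shows "g s = h s"
proof (cases "s = 0")
  case True
  then show ?thesis
    using g h unfolding geod_seg_def by simp
next
  case False
  with s have "0 < s" "0 < dist x q"
    by auto
  then have "dist (g s) (h s) * dist x q \<le> 0"
    using cat0_dist_le_scaled[OF cat g h refl refl, of s] s by simp
  with \<open>0 < dist x q\<close> show ?thesis
    by (simp add: mult_le_0_iff)
qed

lemma cat0_asymptotic_rays_eq:
  fixes g h :: "real \<Rightarrow> 'a::metric_space"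
  assumes cat: "CAT0 TYPE('a)" and g: "geod_ray g" and h: "geod_ray h" and "g 0 = h 0"
    and bounded: "\<forall>t\<ge>0. dist (g t) (h t) \<le> B" and "0 \<le> s"
  shows "g s = h s"
proof (rule ccontr)
  assume "g s \<noteq> h s"
  define d where "d = dist (g s) (h s)"
  have "0 < d" "0 < s"
    using \<open>g s \<noteq> h s\<close> \<open>0 \<le> s\<close> \<open>g 0 = h 0\<close> unfolding d_def by (auto simp: le_less)
  have "0 \<le> B"
    using bounded zero_le_dist order_trans by blast
  have bound: "d * T \<le> s * B" if "s \<le> T" for T
  proof -
    have "0 \<le> T"
      using \<open>0 < s\<close> that by simp
    then have "geod_seg g (g 0) (g T)" "geod_seg h (g 0) (h T)"
      using geod_ray_imp_geod_seg g h \<open>g 0 = h 0\<close> by metis+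
    moreover have "dist (g 0) (g T) = T" "dist (g 0) (h T) = T"
      using g h \<open>g 0 = h 0\<close> \<open>0 \<le> T\<close> unfolding geod_ray_def
      by (metis abs_of_nonneg diff_0 abs_minus_cancel order_refl)+
    ultimately have "d * T \<le> s * dist (g T) (h T)"
      unfolding d_def by (rule cat0_dist_le_scaled[OF cat]) (use \<open>0 < s\<close> that in auto)
    also have "\<dots> \<le> s * B"
      using bounded \<open>0 < s\<close> that by simp
    finally show ?thesis .
  qed
  define T where "T = s * B / d + s"
  have "s \<le> T" "d * T = s * B + s * d"
    unfolding T_def using \<open>0 < d\<close> \<open>0 < s\<close> \<open>0 \<le> B\<close> by (simp_all add: field_simps)
  with bound[of T] mult_pos_pos[OF \<open>0 < s\<close> \<open>0 < d\<close>] show False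
    by linarith
qed

section \<open>Alexandrov angles\<close>

lemma geod_from_dist_start:
  assumes "geod_from x (g, a)" "0 \<le> s" "s \<le> a"
  shows "dist x (g s) = s"
proof -
  have "g 0 = x" "dist (g 0) (g s) = \<bar>0 - s\<bar>"
    using assms unfolding geod_from_def by auto
  then show ?thesis
    using assms(2) by simp
qed

lemma geod_ray_geod_from: "geod_ray c \<Longrightarrow> geod_from (c 0) (c, 1)"
  unfolding geod_ray_def geod_from_def by simp

lemma alex_angle_eqI:
  assumes "0 < a" "0 < b"
    and le: "\<And>s t. 0 < s \<Longrightarrow> s < min a b \<Longrightarrow> 0 < t \<Longrightarrow> t < min a b \<Longrightarrow> cmp_angle x (g s) (h t) \<le> v"
    and attained: "\<And>e. 0 < e \<Longrightarrow> \<exists>s t. 0 < s \<and> s < e \<and> 0 < t \<and> t < e \<and> cmp_angle x (g s) (h t) = v"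
  shows "alex_angle x (g, a) (h, b) = v"
proof -
  have "Sup {cmp_angle x (g s) (h t) | s t. 0 < s \<and> s < e \<and> 0 < t \<and> t < e} = v"
    if "0 < e" "e \<le> min a b" for e
  proof (rule cSup_eq_maximum)
    show "v \<in> {cmp_angle x (g s) (h t) | s t. 0 < s \<and> s < e \<and> 0 < t \<and> t < e}"
      using attained[OF \<open>0 < e\<close>] by auto
    show "y \<le> v" if "y \<in> {cmp_angle x (g s) (h t) | s t. 0 < s \<and> s < e \<and> 0 < t \<and> t < e}" for y
      using that \<open>e \<le> min a b\<close> le by auto
  qed
  moreover have "\<exists>e. 0 < e \<and> e \<le> min a b"
    using assms(1,2) by (intro exI[of _ "min a b"]) simp
  ultimately have "{Sup {cmp_angle x (g s) (h t) | s t. 0 < s \<and> s < e \<and> 0 < t \<and> t < e}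
      | e. 0 < e \<and> e \<le> min a b} = {v}"
    by auto
  then show ?thesis
    unfolding alex_angle_def by simp
qed

lemma alex_angle_self: "geod_from x (g, a) \<Longrightarrow> alex_angle x (g, a) (g, a) = 0"
proof (rule alex_angle_eqI)
  assume g: "geod_from x (g, a)"
  then show "0 < a"
    by (simp add: geod_from_def)
  have zero: "cmp_angle x (g s) (g t) = 0" if "0 < s" "s < a" "0 < t" "t < a" for s t
  proof -
    have "dist (g s) (g t) = \<bar>s - t\<bar>"
      using g that unfolding geod_from_def by simp
    then have "cmp_cos x (g s) (g t) = 1"
      using geod_from_dist_start[OF g] that unfolding cmp_cos_def
      by (simp add: power2_eq_square field_simps)
    then show ?thesis
      by (simp add: cmp_angle_eq_arccos)
  qed
  then show "cmp_angle x (g s) (g t) \<le> 0" if "0 < s" "s < min a a" "0 < t" "t < min a a" for s t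
    using that by simp
  show "\<exists>s t. 0 < s \<and> s < e \<and> 0 < t \<and> t < e \<and> cmp_angle x (g s) (g t) = 0" if "0 < e" for e
    using \<open>0 < a\<close> that zero[of "min e a / 2" "min e a / 2"]
    by (intro exI[of _ "min e a / 2"]) auto
qed (simp add: geod_from_def)

lemma alex_angle_eq_pi:
  assumes g: "geod_from x (g, a)" and h: "geod_from x (h, b)" and "0 < \<rho>"
    and opposite: "\<And>s t. 0 < s \<Longrightarrow> s < \<rho> \<Longrightarrow> 0 < t \<Longrightarrow> t < \<rho> \<Longrightarrow> dist (g s) (h t) = s + t"
  shows "alex_angle x (g, a) (h, b) = pi"
proof (rule alex_angle_eqI)
  show "0 < a" "0 < b"
    using g h by (simp_all add: geod_from_def)
  show "cmp_angle x (g s) (h t) \<le> pi" for s t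
    by (rule cmp_angle_le_pi)
  fix e :: real
  assume "0 < e"
  define m where "m = min (min e \<rho>) (min a b) / 2"
  have m: "0 < m" "m < e" "m < \<rho>" "m \<le> a" "m \<le> b"
    unfolding m_def using \<open>0 < e\<close> \<open>0 < \<rho>\<close> \<open>0 < a\<close> \<open>0 < b\<close> by auto
  then have "cmp_cos x (g m) (h m) = -1"
    using opposite[of m m] geod_from_dist_start[OF g, of m] geod_from_dist_start[OF h, of m]
    unfolding cmp_cos_def by (simp add: power2_eq_square field_simps)
  with m show "\<exists>s t. 0 < s \<and> s < e \<and> 0 < t \<and> t < e \<and> cmp_angle x (g s) (h t) = pi"
    by (intro exI[of _ m]) (simp add: cmp_angle_eq_arccos)
qed

lemma alex_angle_less_imp_cmp_angle_less:
  assumes "0 < a" "0 < b" "alex_angle x (g, a) (h, b) < \<epsilon>"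
  shows "\<exists>e>0. e \<le> min a b \<and>
    (\<forall>s t. 0 < s \<and> s < e \<and> 0 < t \<and> t < e \<longrightarrow> cmp_angle x (g s) (h t) < \<epsilon>)"
proof -
  define A where "A e = {cmp_angle x (g s) (h t) | s t. 0 < s \<and> s < e \<and> 0 < t \<and> t < e}" for e
  have nonempty: "{Sup (A e) | e. 0 < e \<and> e \<le> min a b} \<noteq> {}"
    using assms(1,2) by (auto intro!: exI[of _ "min a b"])
  have "Inf {Sup (A e) | e. 0 < e \<and> e \<le> min a b} < \<epsilon>"
    using assms(3) unfolding alex_angle_def A_def by simp
  from cInf_lessD[OF nonempty this] obtain e where e: "0 < e" "e \<le> min a b" "Sup (A e) < \<epsilon>"
    by blast
  have "cmp_angle x (g s) (h t) < \<epsilon>" if "0 < s" "s < e" "0 < t" "t < e" for s t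
  proof -
    have "cmp_angle x (g s) (h t) \<in> A e"
      unfolding A_def using that by blast
    moreover have "bdd_above (A e)"
      unfolding A_def by (rule bdd_aboveI[of _ pi]) (auto simp: cmp_angle_le_pi)
    ultimately have "cmp_angle x (g s) (h t) \<le> Sup (A e)"
      by (rule cSup_upper)
    with e(3) show ?thesis
      by linarith
  qed
  with e show ?thesis
    by blast
qed

lemma alex_angle_zero_imp_dist_le:
  assumes g: "geod_from x (g, a)" and h: "geod_from x (h, b)"
    and "alex_angle x (g, a) (h, b) = 0" and "0 < \<eta>"
  shows "\<exists>e>0. e \<le> min a b \<and> (\<forall>s. 0 < s \<and> s < e \<longrightarrow> dist (g s) (h s) \<le> \<eta> * s)"
proof -
  define \<eta>' where "\<eta>' = min \<eta> 1"
  \<comment> \<open>for two sides of length \<open>s\<close>, \<open>cmp_cos > q\<close> iff the third side is shorter than \<open>\<eta>' s\<close>\<close>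
  define q where "q = 1 - \<eta>' ^ 2 / 2"
  have "0 < \<eta>'" "\<eta>' \<le> 1"
    unfolding \<eta>'_def using \<open>0 < \<eta>\<close> by auto
  then have "-1 \<le> q" "q < 1"
    unfolding q_def using power_le_one[of \<eta>' 2] by auto
  have "0 < a" "0 < b"
    using g h by (simp_all add: geod_from_def)
  have "alex_angle x (g, a) (h, b) < arccos q"
    using assms(3) arccos_less_arccos[OF \<open>-1 \<le> q\<close> \<open>q < 1\<close>] by simp
  then obtain e where e: "0 < e" "e \<le> min a b"
    and small: "\<forall>s t. 0 < s \<and> s < e \<and> 0 < t \<and> t < e \<longrightarrow> cmp_angle x (g s) (h t) < arccos q"
    using alex_angle_less_imp_cmp_angle_less[OF \<open>0 < a\<close> \<open>0 < b\<close>] by blast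
  have "dist (g s) (h s) \<le> \<eta> * s" if s: "0 < s" "s < e" for s
  proof -
    have "cmp_angle x (g s) (h s) < arccos q"
      using small s by blast
    then have "q < cmp_cos x (g s) (h s)"
      using arccos_le_arccos[OF cmp_cos_bounds(1), of x "g s" "h s" q] \<open>q < 1\<close>
      unfolding cmp_angle_eq_arccos by linarith
    also have "\<dots> = 1 - dist (g s) (h s) ^ 2 / (2 * s ^ 2)"
      using s e(2) geod_from_dist_start[OF g, of s] geod_from_dist_start[OF h, of s]
      by (intro cmp_cos_equidistant) auto
    finally have "dist (g s) (h s) ^ 2 < (\<eta>' * s) ^ 2"
      using s unfolding q_def by (simp add: field_simps power_mult_distrib)
    then have "dist (g s) (h s) < \<eta>' * s"
      by (rule power_less_imp_less_base) (use \<open>0 < \<eta>'\<close> s in auto)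
    moreover have "\<eta>' * s \<le> \<eta> * s"
      unfolding \<eta>'_def using s by (intro mult_right_mono) auto
    ultimately show ?thesis
      by linarith
  qed
  with e show ?thesis
    by blast
qed

lemma dir_cauchy_const: "geod_from x u \<Longrightarrow> dir_cauchy x (\<lambda>n. u)"
  unfolding dir_cauchy_def by (cases u) (simp add: alex_angle_self)

lemma unique_inverse_dir_angle_zero:
  assumes "unique_inverse_dir x u" "geod_from x v" "geod_from x w"
    and "alex_angle x u v = pi" "alex_angle x u w = pi"
  shows "alex_angle x v w = 0"
proof -
  have "(\<lambda>n. alex_angle x v w) \<longlonglongrightarrow> 0"
    using assms dir_cauchy_const[of x v] dir_cauchy_const[of x w]
    unfolding unique_inverse_dir_def by simp
  then show ?thesis
    by (simp add: LIMSEQ_const_iff)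
qed

section \<open>Geodesics from a point towards points of the bordification\<close>

fun geod_towards :: "'a::metric_space \<Rightarrow> 'a bpt \<Rightarrow> (real \<Rightarrow> 'a) \<Rightarrow> bool" where
  "geod_towards x (Fin q) g \<longleftrightarrow> geod_seg g x q"
| "geod_towards x (Ideal D) g \<longleftrightarrow> geod_ray g \<and> g 0 = x \<and> g \<in> D"

fun geod_dom :: "'a::metric_space \<Rightarrow> 'a bpt \<Rightarrow> real set" where
  "geod_dom x (Fin q) = {0..dist x q}"
| "geod_dom x (Ideal D) = {0..}"

text \<open>Germs of rays get length \<open>1\<close>, matching the germ \<open>(c, 1)\<close> in the hypothesis on \<open>c\<close>.\<close>

fun germ_len :: "'a::metric_space \<Rightarrow> 'a bpt \<Rightarrow> real" where
  "germ_len x (Fin q) = dist x q"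
| "germ_len x (Ideal D) = 1"

lemma geod_dom_nonneg: "s \<in> geod_dom x z \<Longrightarrow> 0 \<le> s"
  by (cases z) auto

lemma geod_dom_downward: "s \<in> geod_dom x z \<Longrightarrow> 0 \<le> s' \<Longrightarrow> s' \<le> s \<Longrightarrow> s' \<in> geod_dom x z"
  by (cases z) auto

lemma germ_len_pos: "z \<noteq> Fin x \<Longrightarrow> 0 < germ_len x z"
  by (cases z) auto

lemma germ_len_in_geod_dom: "0 \<le> s \<Longrightarrow> s \<le> germ_len x z \<Longrightarrow> s \<in> geod_dom x z"
  by (cases z) auto

lemma geod_towards_start: "geod_towards x z g \<Longrightarrow> g 0 = x"
  by (cases z) (auto simp: geod_seg_def)

lemma geod_towards_isometric:
  "geod_towards x z g \<Longrightarrow> s \<in> geod_dom x z \<Longrightarrow> t \<in> geod_dom x z \<Longrightarrow> dist (g s) (g t) = \<bar>s - t\<bar>"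
  by (cases z) (auto simp: geod_seg_def geod_ray_def)

lemma geod_towards_dist_start: "geod_towards x z g \<Longrightarrow> s \<in> geod_dom x z \<Longrightarrow> dist x (g s) = s"
  using geod_towards_isometric[of x z g 0 s] geod_towards_start[of x z g]
    geod_dom_nonneg[of s x z] geod_dom_downward[of s x z 0] by simp

lemma geod_towards_geod_seg:
  assumes "geod_towards x z g" "s \<in> geod_dom x z"
  shows "geod_seg g x (g s)"
proof -
  have "dist (g a) (g b) = \<bar>a - b\<bar>" if "a \<in> {0..s}" "b \<in> {0..s}" for a b
    using that assms geod_dom_downward[of s x z] by (intro geod_towards_isometric) auto
  then show ?thesis
    using assms geod_towards_start geod_towards_dist_start unfolding geod_seg_def by fastforce
qed

lemma geod_towards_geod_from:
  assumes "geod_towards x z g" "z \<noteq> Fin x"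
  shows "geod_from x (g, germ_len x z)"
proof -
  have "dist (g a) (g b) = \<bar>a - b\<bar>" if "a \<in> {0..germ_len x z}" "b \<in> {0..germ_len x z}" for a b
    using that assms germ_len_in_geod_dom[of _ x z] by (intro geod_towards_isometric) auto
  then show ?thesis
    using assms germ_len_pos geod_towards_start unfolding geod_from_def by fastforce
qed

lemma ray_through_geod_towards:
  "geod_ray c \<Longrightarrow> c 0 = x \<Longrightarrow> ray_through c x y \<Longrightarrow> geod_towards x y c"
  by (cases y) (auto simp: geod_seg_def geod_ray_def)

lemma ray_class_bounded_dist:
  assumes "Ideal D \<in> Xbar" "r \<in> D" "r' \<in> D"
  shows "\<exists>B. \<forall>t\<ge>0. dist (r t) (r' t) \<le> B"
proof -
  obtain r0 B1 B2 where "D = ray_class r0"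
    and "\<forall>t\<ge>0. dist (r0 t) (r t) \<le> B1" "\<forall>t\<ge>0. dist (r0 t) (r' t) \<le> B2"
    using assms unfolding Xbar_def ray_class_def asymptotic_def by auto
  then have "\<forall>t\<ge>0. dist (r t) (r' t) \<le> B1 + B2"
    by (smt (verit) dist_commute dist_triangle)
  then show ?thesis ..
qed

lemma ray_class_memI:
  assumes "Ideal D \<in> Xbar" "r \<in> D" "geod_ray r'" "\<forall>t\<ge>0. dist (r t) (r' t) \<le> B"
  shows "r' \<in> D"
proof -
  obtain r0 B1 where D: "D = ray_class r0" and "\<forall>t\<ge>0. dist (r0 t) (r t) \<le> B1"
    using assms(1,2) unfolding Xbar_def ray_class_def asymptotic_def by auto
  with assms(4) have "\<forall>t\<ge>0. dist (r0 t) (r' t) \<le> B1 + B"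
    by (smt (verit) dist_triangle)
  with assms(3) show ?thesis
    unfolding D ray_class_def asymptotic_def by blast
qed

lemma cat0_geod_towards_unique:
  fixes g h :: "real \<Rightarrow> 'a::metric_space"
  assumes cat: "CAT0 TYPE('a)" and "z \<in> Xbar"
    and g: "geod_towards x z g" and h: "geod_towards x z h" and s: "s \<in> geod_dom x z"
  shows "g s = h s"
proof (cases z)
  case (Fin q)
  with cat0_geod_seg_unique[OF cat] g h s show ?thesis
    by simp
next
  case (Ideal D)
  with g h \<open>z \<in> Xbar\<close> obtain B where "\<forall>t\<ge>0. dist (g t) (h t) \<le> B"
    using ray_class_bounded_dist by fastforce
  with cat0_asymptotic_rays_eq[OF cat] g h s Ideal show ?thesis
    by simp
qed

section \<open>Opposite geodesics\<close>

definition opposite_geods ::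
    "'a::metric_space \<Rightarrow> 'a bpt \<Rightarrow> 'a bpt \<Rightarrow> (real \<Rightarrow> 'a) \<Rightarrow> (real \<Rightarrow> 'a) \<Rightarrow> bool" where
  "opposite_geods x u v gu gv \<longleftrightarrow> geod_towards x u gu \<and> geod_towards x v gv \<and>
     (\<forall>s\<in>geod_dom x u. \<forall>t\<in>geod_dom x v. dist (gu s) (gv t) = s + t)"

lemma opposite_geods_commute: "opposite_geods x u v gu gv \<longleftrightarrow> opposite_geods x v u gv gu"
  unfolding opposite_geods_def by (auto simp: dist_commute add.commute)

text \<open>
  Near \<open>x\<close>, \<open>g''\<close> stays within \<open>\<eta>\<sigma>\<close> of \<open>g'\<close>, which is opposite to \<open>h\<close>; monotonicity of
  comparison angles carries this almost-opposition from \<open>g'' \<sigma>\<close> out to \<open>g'' s\<close>.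
\<close>

lemma cat0_cmp_cos_near_minus_one:
  fixes g' g'' h :: "real \<Rightarrow> 'a::metric_space"
  assumes cat: "CAT0 TYPE('a)" and opp: "opposite_geods x z' w g' h"
    and g'': "geod_towards x z'' g''"
    and z': "z' \<noteq> Fin x" and z'': "z'' \<noteq> Fin x"
    and angle: "alex_angle x (g', germ_len x z') (g'', germ_len x z'') = 0"
    and s: "s \<in> geod_dom x z''" "0 < s" and t: "t \<in> geod_dom x w" "0 < t"
    and "0 < \<eta>" "\<eta> \<le> 1"
  shows "cmp_cos x (g'' s) (h t) \<le> -1 + \<eta> * (s + t) / t"
proof -
  have g': "geod_towards x z' g'" and h: "geod_towards x w h"
    using opp by (simp_all add: opposite_geods_def)
  obtain e where e: "0 < e" "e \<le> min (germ_len x z') (germ_len x z'')"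
    and close: "\<forall>\<sigma>. 0 < \<sigma> \<and> \<sigma> < e \<longrightarrow> dist (g' \<sigma>) (g'' \<sigma>) \<le> \<eta> * \<sigma>"
    using alex_angle_zero_imp_dist_le[OF geod_towards_geod_from[OF g' z']
        geod_towards_geod_from[OF g'' z''] angle \<open>0 < \<eta>\<close>] by blast
  define \<sigma> where "\<sigma> = min (e / 2) s"
  have \<sigma>: "0 < \<sigma>" "\<sigma> < e" "\<sigma> \<le> s"
    unfolding \<sigma>_def using e s by auto
  then have "\<sigma> \<in> geod_dom x z'" "\<sigma> \<in> geod_dom x z''"
    using e germ_len_in_geod_dom[of \<sigma> x] by auto
  then have "dist (g' \<sigma>) (h t) = \<sigma> + t"
    using opp t unfolding opposite_geods_def by blast
  then have far: "\<sigma> + t - \<eta> * \<sigma> \<le> dist (g'' \<sigma>) (h t)"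
    using close \<sigma> dist_triangle[of "g' \<sigma>" "h t" "g'' \<sigma>"] by force
  have "cmp_cos x (g'' s) (h t) \<le> cmp_cos x (g'' \<sigma>) (h t)"
    using cat0_cmp_cos_mono[OF cat geod_towards_geod_seg[OF g'' s(1)]
        geod_towards_geod_seg[OF h t(1)]] geod_towards_dist_start[OF g'' s(1)] geod_towards_dist_start[OF h t(1)] \<sigma> t by simp
  also have "\<dots> \<le> -1 + \<eta> * (\<sigma> + t) / t"
    using geod_towards_dist_start[OF g'' \<open>\<sigma> \<in> geod_dom x z''\<close>] geod_towards_dist_start[OF h t(1)]
      \<sigma> t \<open>0 < \<eta>\<close> \<open>\<eta> \<le> 1\<close> far by (intro cmp_cos_le_of_dist_ge) auto
  also have "\<dots> \<le> -1 + \<eta> * (s + t) / t"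
    using \<sigma> t \<open>0 < \<eta>\<close> by (simp add: divide_right_mono)
  finally show ?thesis .
qed

lemma cat0_opposite_geods_transfer:
  fixes g' g'' h :: "real \<Rightarrow> 'a::metric_space"
  assumes cat: "CAT0 TYPE('a)" and opp: "opposite_geods x z' w g' h"
    and g'': "geod_towards x z'' g''"
    and z': "z' \<noteq> Fin x" and z'': "z'' \<noteq> Fin x"
    and angle: "alex_angle x (g', germ_len x z') (g'', germ_len x z'') = 0"
  shows "opposite_geods x z'' w g'' h"
proof -
  have h: "geod_towards x w h"
    using opp by (simp add: opposite_geods_def)
  have "dist (g'' s) (h t) = s + t" if s: "s \<in> geod_dom x z''" and t: "t \<in> geod_dom x w" for s t
  proof (cases "s = 0 \<or> t = 0")
    case True
    then show ?thesis
      using geod_towards_dist_start[OF g'' s] geod_towards_dist_start[OF h t]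
        geod_towards_start[OF g''] geod_towards_start[OF h] by (auto simp: dist_commute)
  next
    case False
    with s t have "0 < s" "0 < t"
      using geod_dom_nonneg by (auto simp: le_less)
    have "cmp_cos x (g'' s) (h t) \<le> -1 + \<epsilon>" if "0 < \<epsilon>" for \<epsilon>
    proof -
      define \<eta> where "\<eta> = min 1 (\<epsilon> * t / (s + t))"
      have "0 < \<eta>" "\<eta> \<le> 1" "\<eta> \<le> \<epsilon> * t / (s + t)"
        unfolding \<eta>_def using \<open>0 < s\<close> \<open>0 < t\<close> \<open>0 < \<epsilon>\<close> by auto
      have "\<eta> * (s + t) / t \<le> \<epsilon>"
        using \<open>\<eta> \<le> \<epsilon> * t / (s + t)\<close> \<open>0 < s\<close> \<open>0 < t\<close> by (simp add: pos_le_divide_eq pos_divide_le_eq)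
      with cat0_cmp_cos_near_minus_one[OF cat opp g'' z' z'' angle s \<open>0 < s\<close> t \<open>0 < t\<close>
          \<open>0 < \<eta>\<close> \<open>\<eta> \<le> 1\<close>]
      show ?thesis
        by linarith
    qed
    then have "cmp_cos x (g'' s) (h t) \<le> -1"
      by (rule field_le_epsilon)
    then show ?thesis
      using cmp_cos_le_minus_one_imp_dist geod_towards_dist_start[OF g'' s]
        geod_towards_dist_start[OF h t] \<open>0 < s\<close> \<open>0 < t\<close> by force
  qed
  with g'' h show ?thesis
    unfolding opposite_geods_def by blast
qed

lemma geod_seg_split_opposite:
  assumes g: "geod_seg g p q" and \<tau>: "\<tau> \<in> {0..dist p q}"
  shows "opposite_geods (g \<tau>) (Fin p) (Fin q) (\<lambda>s. g (\<tau> - s)) (\<lambda>t. g (\<tau> + t))"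
proof -
  have "dist (g \<tau>) p = \<tau>" "dist (g \<tau>) q = dist p q - \<tau>"
    using geod_seg_dist_start[OF g \<tau>] \<tau>
      geod_seg_dist_start[OF geod_seg_reverse[OF g], of "dist p q - \<tau>"]
    by (auto simp: dist_commute)
  with g \<tau> show ?thesis
    unfolding opposite_geods_def geod_seg_def
    using geod_seg_backwards[OF g \<tau>] geod_seg_forwards[OF g \<tau>] by auto
qed

lemma geod_ray_split_opposite:
  assumes r: "geod_ray r" "r 0 = p" "r \<in> D" and "Ideal D \<in> Xbar" and "0 \<le> \<tau>"
  shows "opposite_geods (r \<tau>) (Fin p) (Ideal D) (\<lambda>s. r (\<tau> - s)) (\<lambda>t. r (\<tau> + t))"
proof -
  have iso: "dist (r a) (r b) = \<bar>a - b\<bar>" if "0 \<le> a" "0 \<le> b" for a b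
    using r(1) that unfolding geod_ray_def by blast
  have seg: "geod_seg r p (r \<tau>)" and "dist p (r \<tau>) = \<tau>"
    using geod_ray_imp_geod_seg[OF r(1) \<open>0 \<le> \<tau>\<close>] iso[of 0 \<tau>] r(2) \<open>0 \<le> \<tau>\<close> by auto
  have ray: "geod_ray (\<lambda>t. r (\<tau> + t))"
    unfolding geod_ray_def using iso \<open>0 \<le> \<tau>\<close> by simp
  moreover have "(\<lambda>t. r (\<tau> + t)) \<in> D"
    using iso \<open>0 \<le> \<tau>\<close> by (intro ray_class_memI[OF \<open>Ideal D \<in> Xbar\<close> r(3) ray, of \<tau>]) simp
  moreover have "geod_seg (\<lambda>s. r (\<tau> - s)) (r \<tau>) p"
    using geod_seg_backwards[OF seg, of \<tau>] \<open>dist p (r \<tau>) = \<tau>\<close> \<open>0 \<le> \<tau>\<close> by simp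
  ultimately show ?thesis
    unfolding opposite_geods_def using iso \<open>dist p (r \<tau>) = \<tau>\<close> by (simp add: dist_commute)
qed

lemma geod_line_split_opposite:
  assumes l: "geod_line l" "l \<in> D" "(\<lambda>t. l (- t)) \<in> C" and "Ideal C \<in> Xbar" "Ideal D \<in> Xbar"
  shows "opposite_geods (l \<tau>) (Ideal C) (Ideal D) (\<lambda>s. l (\<tau> - s)) (\<lambda>t. l (\<tau> + t))"
proof -
  have iso: "dist (l a) (l b) = \<bar>a - b\<bar>" for a b
    using l(1) unfolding geod_line_def by blast
  have rays: "geod_ray (\<lambda>s. l (\<tau> - s))" "geod_ray (\<lambda>t. l (\<tau> + t))"
    unfolding geod_ray_def using iso by (simp_all add: abs_minus_commute)
  have "(\<lambda>s. l (\<tau> - s)) \<in> C"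
    using iso by (intro ray_class_memI[OF \<open>Ideal C \<in> Xbar\<close> l(3) rays(1), of "\<bar>\<tau>\<bar>"]) simp
  moreover have "(\<lambda>t. l (\<tau> + t)) \<in> D"
    using iso by (intro ray_class_memI[OF \<open>Ideal D \<in> Xbar\<close> l(2) rays(2), of "\<bar>\<tau>\<bar>"]) simp
  ultimately show ?thesis
    unfolding opposite_geods_def using rays iso by simp
qed

lemma mem_geods_imp_opposite_geods:
  assumes "u \<in> Xbar" "v \<in> Xbar" "S \<in> geods u v" "x \<in> S"
  shows "\<exists>gu gv. opposite_geods x u v gu gv"
proof (cases u)
  case (Fin p)
  show ?thesis
  proof (cases v)
    case (Fin q)
    with \<open>u = Fin p\<close> assms(3,4) obtain g \<tau> where "geod_seg g p q" "\<tau> \<in> {0..dist p q}" "x = g \<tau>"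
      by auto
    then show ?thesis
      using geod_seg_split_opposite \<open>u = Fin p\<close> Fin by blast
  next
    case (Ideal D)
    with \<open>u = Fin p\<close> assms(3,4) obtain r \<tau> where "geod_ray r" "r 0 = p" "r \<in> D" "0 \<le> \<tau>" "x = r \<tau>"
      by auto
    then show ?thesis
      using geod_ray_split_opposite assms(2) \<open>u = Fin p\<close> Ideal by blast
  qed
next
  case (Ideal C)
  show ?thesis
  proof (cases v)
    case (Fin q)
    with \<open>u = Ideal C\<close> assms(3,4) obtain r \<tau> where "geod_ray r" "r 0 = q" "r \<in> C" "0 \<le> \<tau>" "x = r \<tau>"
      by auto
    then show ?thesis
      using geod_ray_split_opposite assms(1) \<open>u = Ideal C\<close> Fin opposite_geods_commute by blast
  next
    case (Ideal D)
    with \<open>u = Ideal C\<close> assms(3,4) obtain l \<tau>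
      where "geod_line l" "l \<in> D" "(\<lambda>t. l (- t)) \<in> C" "x = l \<tau>"
      by auto
    then show ?thesis
      using geod_line_split_opposite assms(1,2) \<open>u = Ideal C\<close> Ideal by blast
  qed
qed

definition glue :: "(real \<Rightarrow> 'a) \<Rightarrow> (real \<Rightarrow> 'a) \<Rightarrow> real \<Rightarrow> real \<Rightarrow> 'a" where
  "glue gu gv a \<sigma> = (if \<sigma> \<le> a then gu (a - \<sigma>) else gv (\<sigma> - a))"

lemma glue_shift: "gu 0 = gv 0 \<Longrightarrow> 0 \<le> t \<Longrightarrow> glue gu gv a (a + t) = gv t"
  unfolding glue_def by auto

lemma glue_isometric:
  assumes opp: "opposite_geods x u v gu gv"
    and \<sigma>: "\<sigma> \<le> a \<Longrightarrow> a - \<sigma> \<in> geod_dom x u" "a < \<sigma> \<Longrightarrow> \<sigma> - a \<in> geod_dom x v"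
    and \<tau>: "\<tau> \<le> a \<Longrightarrow> a - \<tau> \<in> geod_dom x u" "a < \<tau> \<Longrightarrow> \<tau> - a \<in> geod_dom x v"
  shows "dist (glue gu gv a \<sigma>) (glue gu gv a \<tau>) = \<bar>\<sigma> - \<tau>\<bar>"
proof -
  have u: "geod_towards x u gu" and v: "geod_towards x v gv"
    and uv: "\<forall>s\<in>geod_dom x u. \<forall>t\<in>geod_dom x v. dist (gu s) (gv t) = s + t"
    using opp unfolding opposite_geods_def by auto
  consider "\<sigma> \<le> a" "\<tau> \<le> a" | "\<sigma> \<le> a" "a < \<tau>" | "a < \<sigma>" "\<tau> \<le> a" | "a < \<sigma>" "a < \<tau>"
    by fastforce
  then show ?thesis
  proof cases
    case 1
    then show ?thesis
      using geod_towards_isometric[OF u \<sigma>(1) \<tau>(1)] by (simp add: glue_def abs_minus_commute)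
  next
    case 2
    then show ?thesis
      using uv \<sigma>(1) \<tau>(2) by (simp add: glue_def)
  next
    case 3
    then show ?thesis
      using uv \<sigma>(2) \<tau>(1) by (simp add: glue_def dist_commute)
  next
    case 4
    then show ?thesis
      using geod_towards_isometric[OF v \<sigma>(2) \<tau>(2)] by (simp add: glue_def)
  qed
qed

lemma opposite_geods_join_seg:
  assumes opp: "opposite_geods x (Fin p) (Fin q) gu gv"
  shows "\<exists>S\<in>geods (Fin p) (Fin q). x \<in> S"
proof -
  define a b where "a = dist x p" and "b = dist x q"
  have u: "geod_seg gu x p" and v: "geod_seg gv x q"
    and uv: "\<forall>s\<in>{0..a}. \<forall>t\<in>{0..b}. dist (gu s) (gv t) = s + t"
    using opp unfolding opposite_geods_def a_def b_def by auto
  then have ends: "gu 0 = x" "gv 0 = x" "gu a = p" "gv b = q"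
    unfolding geod_seg_def a_def b_def by auto
  have "0 \<le> a" "0 \<le> b"
    unfolding a_def b_def by simp_all
  with uv ends have "dist p q = a + b"
    by force
  have "geod_seg (glue gu gv a) p q"
    unfolding geod_seg_def \<open>dist p q = a + b\<close>
  proof (intro conjI ballI)
    show "glue gu gv a 0 = p" "glue gu gv a (a + b) = q"
      using ends glue_shift[of gu gv b a] \<open>0 \<le> a\<close> \<open>0 \<le> b\<close> by (simp_all add: glue_def)
    show "dist (glue gu gv a \<sigma>) (glue gu gv a \<tau>) = \<bar>\<sigma> - \<tau>\<bar>"
      if "\<sigma> \<in> {0..a + b}" "\<tau> \<in> {0..a + b}" for \<sigma> \<tau>
      using that by (intro glue_isometric[OF opp]) (auto simp: a_def b_def)
  qed
  moreover have "x = glue gu gv a a"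
    using ends by (simp add: glue_def)
  ultimately show ?thesis
    using \<open>0 \<le> a\<close> \<open>0 \<le> b\<close> \<open>dist p q = a + b\<close> by fastforce
qed

lemma opposite_geods_join_ray:
  assumes opp: "opposite_geods x (Fin p) (Ideal D) gu gv" and "Ideal D \<in> Xbar"
  shows "\<exists>S\<in>geods (Fin p) (Ideal D). x \<in> S"
proof -
  define a where "a = dist x p"
  define G where "G = glue gu gv a"
  have u: "geod_seg gu x p" and "gv 0 = x" "gv \<in> D"
    using opp unfolding opposite_geods_def by auto
  then have "gu 0 = x" "gu a = p" "0 \<le> a"
    unfolding geod_seg_def a_def by auto
  have G_iso: "dist (G \<sigma>) (G \<tau>) = \<bar>\<sigma> - \<tau>\<bar>" if "0 \<le> \<sigma>" "0 \<le> \<tau>" for \<sigma> \<tau>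
    unfolding G_def using that by (intro glue_isometric[OF opp]) (auto simp: a_def)
  then have ray: "geod_ray G"
    unfolding geod_ray_def by blast
  have "dist (gv t) (G t) \<le> a" if "0 \<le> t" for t
    using G_iso[of "a + t" t] glue_shift[of gu gv t a] \<open>gu 0 = x\<close> \<open>gv 0 = x\<close> \<open>0 \<le> a\<close> that
    unfolding G_def by simp
  then have "G \<in> D"
    using ray_class_memI[OF \<open>Ideal D \<in> Xbar\<close> \<open>gv \<in> D\<close> ray] by blast
  moreover have "G 0 = p" "x = G a"
    using \<open>gu 0 = x\<close> \<open>gu a = p\<close> \<open>0 \<le> a\<close> unfolding G_def glue_def by auto
  ultimately show ?thesis
    using ray \<open>0 \<le> a\<close> by fastforce
qed

lemma opposite_geods_join_line:
  assumes opp: "opposite_geods x (Ideal C) (Ideal D) gu gv" and "Ideal C \<in> Xbar" "Ideal D \<in> Xbar"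
  shows "\<exists>S\<in>geods (Ideal C) (Ideal D). x \<in> S"
proof -
  define l where "l = glue gu gv 0"
  have "gu 0 = x" "gv 0 = x" "gu \<in> C" "gv \<in> D"
    using opp unfolding opposite_geods_def by auto
  have line: "geod_line l"
    unfolding geod_line_def l_def by (intro allI glue_isometric[OF opp]) auto
  then have rays: "geod_ray l" "geod_ray (\<lambda>t. l (- t))"
    unfolding geod_line_def geod_ray_def by (simp_all add: abs_minus_commute)
  have "l t = gv t" "l (- t) = gu t" if "0 \<le> t" for t
    using glue_shift[of gu gv t 0] \<open>gu 0 = x\<close> \<open>gv 0 = x\<close> that unfolding l_def glue_def by auto
  then have "l \<in> D" "(\<lambda>t. l (- t)) \<in> C"
    using ray_class_memI[OF \<open>Ideal D \<in> Xbar\<close> \<open>gv \<in> D\<close> rays(1), of 0]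
      ray_class_memI[OF \<open>Ideal C \<in> Xbar\<close> \<open>gu \<in> C\<close> rays(2), of 0] by simp_all
  moreover have "x = l 0"
    using \<open>gu 0 = x\<close> unfolding l_def glue_def by simp
  ultimately show ?thesis
    using line by auto
qed

lemma opposite_geods_imp_mem_geods:
  assumes "u \<in> Xbar" "v \<in> Xbar" "opposite_geods x u v gu gv"
  shows "\<exists>S\<in>geods u v. x \<in> S"
proof (cases u; cases v)
  fix p q
  assume "u = Fin p" "v = Fin q"
  then show ?thesis
    using opposite_geods_join_seg assms(3) by blast
next
  fix p D
  assume "u = Fin p" "v = Ideal D"
  then show ?thesis
    using opposite_geods_join_ray assms(2,3) by blast
next
  fix C q
  assume "u = Ideal C" "v = Fin q"
  with assms(3) have "opposite_geods x (Fin q) (Ideal C) gv gu"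
    using opposite_geods_commute by blast
  from opposite_geods_join_ray[OF this] show ?thesis
    using assms(1) \<open>u = Ideal C\<close> \<open>v = Fin q\<close> by simp
next
  fix C D
  assume "u = Ideal C" "v = Ideal D"
  then show ?thesis
    using opposite_geods_join_line assms by blast
qed

section \<open>Shadows\<close>

lemma cat0_Shadow_subset:
  fixes g' g'' :: "real \<Rightarrow> 'a::metric_space"
  assumes cat: "CAT0 TYPE('a)" and "z' \<in> Xbar" "z'' \<in> Xbar"
    and z': "z' \<noteq> Fin x" and z'': "z'' \<noteq> Fin x"
    and g': "geod_towards x z' g'" and g'': "geod_towards x z'' g''"
    and angle: "alex_angle x (g', germ_len x z') (g'', germ_len x z'') = 0"
  shows "Shadow z' x \<subseteq> Shadow z'' x"
proof
  fix w
  assume "w \<in> Shadow z' x"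
  then obtain S where "w \<in> Xbar" "S \<in> geods z' w" "x \<in> S"
    unfolding Shadow_def by blast
  then obtain gu h where opp: "opposite_geods x z' w gu h"
    using mem_geods_imp_opposite_geods \<open>z' \<in> Xbar\<close> by blast
  have "gu s = g' s" if "s \<in> geod_dom x z'" for s
    using cat0_geod_towards_unique[OF cat \<open>z' \<in> Xbar\<close> _ g' that] opp
    unfolding opposite_geods_def by blast
  with opp g' have "opposite_geods x z' w g' h"
    unfolding opposite_geods_def by simp
  then have "opposite_geods x z'' w g'' h"
    by (rule cat0_opposite_geods_transfer[OF cat _ g'' z' z'' angle])
  then obtain S' where "S' \<in> geods z'' w" "x \<in> S'"
    using opposite_geods_imp_mem_geods \<open>z'' \<in> Xbar\<close> \<open>w \<in> Xbar\<close> by blast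
  with \<open>w \<in> Xbar\<close> show "w \<in> Shadow z'' x"
    unfolding Shadow_def by blast
qed

lemma cat0_Shadow_angle_pi:
  fixes c :: "real \<Rightarrow> 'a::metric_space"
  assumes cat: "CAT0 TYPE('a)" and "y \<in> Xbar" "y \<noteq> Fin x"
    and c: "geod_ray c" "geod_towards x y c" and "z \<in> Shadow y x" "z \<noteq> Fin x"
  shows "\<exists>g. geod_towards x z g \<and> alex_angle x (c, 1) (g, germ_len x z) = pi"
proof -
  obtain S where "z \<in> Xbar" "S \<in> geods y z" "x \<in> S"
    using \<open>z \<in> Shadow y x\<close> unfolding Shadow_def by blast
  then obtain k g where opp: "opposite_geods x y z k g"
    using mem_geods_imp_opposite_geods \<open>y \<in> Xbar\<close> by blast
  then have g: "geod_towards x z g"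
    unfolding opposite_geods_def by simp
  have "k s = c s" if "s \<in> geod_dom x y" for s
    using cat0_geod_towards_unique[OF cat \<open>y \<in> Xbar\<close> _ c(2) that] opp
    unfolding opposite_geods_def by blast
  define \<rho> where "\<rho> = min (germ_len x y) (germ_len x z)"
  have "0 < \<rho>"
    unfolding \<rho>_def using germ_len_pos[OF \<open>y \<noteq> Fin x\<close>] germ_len_pos[OF \<open>z \<noteq> Fin x\<close>] by simp
  have "alex_angle x (c, 1) (g, germ_len x z) = pi"
  proof (rule alex_angle_eq_pi[OF _ geod_towards_geod_from[OF g \<open>z \<noteq> Fin x\<close>] \<open>0 < \<rho>\<close>])
    show "geod_from x (c, 1)"
      using geod_ray_geod_from[OF c(1)] geod_towards_start[OF c(2)] by simp
    fix s t
    assume "0 < s" "s < \<rho>" "0 < t" "t < \<rho>"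
    then have "s \<in> geod_dom x y" "t \<in> geod_dom x z"
      unfolding \<rho>_def by (auto intro: germ_len_in_geod_dom)
    with opp \<open>\<And>s. s \<in> geod_dom x y \<Longrightarrow> k s = c s\<close> show "dist (c s) (g t) = s + t"
      unfolding opposite_geods_def by metis
  qed
  with g show ?thesis
    by blast
qed

theorem corollary3:
  fixes x0 :: "'a::complete_space" and y z' z'' :: "'a bpt" and c :: "real \<Rightarrow> 'a"
  assumes "CAT0 TYPE('a)"
    and "locally compact (UNIV :: 'a set)"
    and "geodesically_complete TYPE('a)"
    and "connected_at_infinity TYPE('a)"
    and "y \<in> Xbar" and "y \<noteq> Fin x0"
    and "geod_ray c" and "c 0 = x0" and "ray_through c x0 y"
    and "unique_inverse_dir x0 (c, 1)"
    and "z' \<in> Shadow y x0" and "z'' \<in> Shadow y x0"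
    and "z' \<noteq> Fin x0" and "z'' \<noteq> Fin x0"
  shows "Shadow z' x0 = Shadow z'' x0"
proof -
  note cat = assms(1)
  have c: "geod_towards x0 y c"
    using ray_through_geod_towards assms(7-9) by blast
  obtain g' where g': "geod_towards x0 z' g'" "alex_angle x0 (c, 1) (g', germ_len x0 z') = pi"
    using cat0_Shadow_angle_pi[OF cat assms(5,6,7) c assms(11,13)] by blast
  obtain g'' where g'': "geod_towards x0 z'' g''" "alex_angle x0 (c, 1) (g'', germ_len x0 z'') = pi"
    using cat0_Shadow_angle_pi[OF cat assms(5,6,7) c assms(12,14)] by blast
  have "geod_from x0 (g', germ_len x0 z')" "geod_from x0 (g'', germ_len x0 z'')"
    using geod_towards_geod_from g'(1) g''(1) assms(13,14) by blast+
  then have "alex_angle x0 (g', germ_len x0 z') (g'', germ_len x0 z'') = 0"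
    "alex_angle x0 (g'', germ_len x0 z'') (g', germ_len x0 z') = 0"
    using unique_inverse_dir_angle_zero[OF assms(10)] g'(2) g''(2) by blast+
  moreover have "z' \<in> Xbar" "z'' \<in> Xbar"
    using assms(11,12) unfolding Shadow_def by blast+
  ultimately show ?thesis
    using cat0_Shadow_subset[OF cat] g'(1) g''(1) assms(13,14) by (intro equalityI) blast+
qed

end
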